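(* (a) Let $n\ge 7$ and let $TL_n(a,a-1,1)$ be a 6-valent first-kind Frobenius circulant with cyclic kernel, where $n\equiv 1 \pmod 6$ and $a$ is a solution of $x^2-x+1\equiv 0 \pmod n$. Then $TL_n(a,a-1,1)$ is isomorphic to $EJ_\alpha$ for some $\alpha=c+d\rho\in\mathbb{Z}[\rho]$ with $\gcd(c,d)=1$. Moreover, letting $k$ be the integer defined by $a^2-a+1=kn$, one has $\alpha=(rn+m)+(sn-ma)\rho$, or $\alpha=(rn+m)+(sn+m(a-1))\rho$, or $\alpha=(rn+ma)+(sn-m(a-1))\rho$, where $(m,r,s)$ is an integer solution of, respectively, $$km^2-[(a-2)r+(2a-1)s]m+(r^2+rs+s^2)n=1,$$ $$km^2+[(a+1)r+(2a-1)s]m+(r^2+rs+s^2)n=1,$$ $$km^2+[(a+1)r-(a-2)s]m+(r^2+rs+s^2)n=1.$$ (b) Let $\alpha=c+d\rho\in\mathbb{Z}[\rho]$ with $N(\alpha)\ge 7$ and $\gcd(c,d)=1$. Then $EJ_\alpha$ is isomorphic to a 6-valent first-kind Frobenius circulant with cyclic kernel if and only if $N(\alpha)\equiv 1 \pmod 6$.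
   Context: $\rho=(1+\sqrt{-3})/2$, $\mathbb{Z}[\rho]=\{x+y\rho: x,y\in\mathbb{Z}\}$ is the ring of Eisenstein-Jacobi integers with norm $N(x+y\rho)=x^2+xy+y^2$. For $0\ne\alpha\in\mathbb{Z}[\rho]$ with $N(\alpha)\ge 7$, the Eisenstein-Jacobi graph $EJ_\alpha$ is the Cayley graph on the additive group of $\mathbb{Z}[\rho]/(\alpha)$ with connection set $\{\pm[1]_\alpha,\pm[\rho]_\alpha,\pm[\rho^2]_\alpha\}$, i.e. $[\xi]_\alpha,[\eta]_\alpha$ are adjacent iff their difference is one of these six classes. For $n\ge 7$, $\mathbb{Z}_n$ denotes integers mod $n$ with classes $[m]$ and unit group $\mathbb{Z}_n^*$ acting by multiplication; $\mathrm{Cay}(K,S)$ is the Cayley graph ($x\sim y$ iff $xy^{-1}\in S$); $TL_n(a,b,c)=\mathrm{Cay}(\mathbb{Z}_n,\{\pm[a],\pm[b],\pm[c]\})$ when $a,b,c,n-a,n-b,n-c$ are pairwise distinct mod $n$. A Frobenius group is a transitive, non-regular permutation group in which only the identity fixes two points; a finite one is $K\rtimes H$ with regular normal kernel $K$ and point stabiliser $H$ acting on $K$ by conjugation. A first-kind $K\rtimes H$-Frobenius graph is $\mathrm{Cay}(K,s^H)$ with $\langle s^H\rangle=K$ and $|H|$ even or $s$ an involution. A 6-valent first-kind Frobenius circulant with cyclic kernel is a 6-valent $TL_n(a,b,c)$ that is a first-kind $\mathbb{Z}_n\rtimes H$-Frobenius graph for some $H\le \mathbb{Z}_n^*$ with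 $\mathbb{Z}_n\rtimes H$ (acting by $[x]^{([y],[m])}=[(x+y)m]$) a Frobenius group with kernel $\mathbb{Z}_n$. *)

theory Defs
  imports Main "HOL-Number_Theory.Cong"
begin

definition graph_iso :: "('a set \<times> ('a \<Rightarrow> 'a \<Rightarrow> bool)) \<Rightarrow> ('b set \<times> ('b \<Rightarrow> 'b \<Rightarrow> bool)) \<Rightarrow> bool" where
  "graph_iso G1 G2 \<longleftrightarrow> (\<exists>f. bij_betw f (fst G1) (fst G2) \<and>
     (\<forall>x\<in>fst G1. \<forall>y\<in>fst G1. snd G1 x y \<longleftrightarrow> snd G2 (f x) (f y)))"

section \<open>Eisenstein-Jacobi integers: the pair (x,y) stands for x + y*rho, rho^2 = rho - 1\<close>

definition ej_add :: "int \<times> int \<Rightarrow> int \<times> int \<Rightarrow> int \<times> int" where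
  "ej_add p q = (fst p + fst q, snd p + snd q)"

definition ej_sub :: "int \<times> int \<Rightarrow> int \<times> int \<Rightarrow> int \<times> int" where
  "ej_sub p q = (fst p - fst q, snd p - snd q)"

definition ej_mult :: "int \<times> int \<Rightarrow> int \<times> int \<Rightarrow> int \<times> int" where
  "ej_mult p q = (fst p * fst q - snd p * snd q,
                  fst p * snd q + snd p * fst q + snd p * snd q)"

definition ej_norm :: "int \<times> int \<Rightarrow> int" where
  "ej_norm p = (fst p)^2 + fst p * snd p + (snd p)^2"

definition ej_cong :: "int \<times> int \<Rightarrow> int \<times> int \<Rightarrow> int \<times> int \<Rightarrow> bool" where
  "ej_cong \<alpha> \<xi> \<eta> \<longleftrightarrow> (\<exists>\<gamma>. ej_sub \<xi> \<eta> = ej_mult \<alpha> \<gamma>)"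

text \<open>the six classes +-1, +-rho, +-rho^2 (rho^2 = -1 + rho)\<close>
definition ej_conn :: "(int \<times> int) set" where
  "ej_conn = {(1,0), (-1,0), (0,1), (0,-1), (-1,1), (1,-1)}"

definition EJ :: "int \<times> int \<Rightarrow> (int \<times> int) set set \<times> ((int \<times> int) set \<Rightarrow> (int \<times> int) set \<Rightarrow> bool)" where
  "EJ \<alpha> = (UNIV // {(\<xi>, \<eta>). ej_cong \<alpha> \<xi> \<eta>},
            (\<lambda>X Y. \<exists>\<xi>\<in>X. \<exists>\<eta>\<in>Y. \<exists>u\<in>ej_conn. ej_cong \<alpha> (ej_sub \<xi> \<eta>) u))"

definition cay_Zn :: "int \<Rightarrow> int set \<Rightarrow> int set \<times> (int \<Rightarrow> int \<Rightarrow> bool)" where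
  "cay_Zn n S = ({0..<n}, (\<lambda>x y. (x - y) mod n \<in> S))"

definition tl_conn :: "int \<Rightarrow> int \<Rightarrow> int \<Rightarrow> int \<Rightarrow> int set" where
  "tl_conn n a b c = {a mod n, (-a) mod n, b mod n, (-b) mod n, c mod n, (-c) mod n}"

definition TL :: "int \<Rightarrow> int \<Rightarrow> int \<Rightarrow> int \<Rightarrow> int set \<times> (int \<Rightarrow> int \<Rightarrow> bool)" where
  "TL n a b c = cay_Zn n (tl_conn n a b c)"

definition tl_6valent :: "int \<Rightarrow> int \<Rightarrow> int \<Rightarrow> int \<Rightarrow> bool" where
  "tl_6valent n a b c \<longleftrightarrow> distinct [a mod n, b mod n, c mod n, (n - a) mod n, (n - b) mod n, (n - c) mod n]"

definition frobenius_group :: "'a set \<Rightarrow> ('a \<Rightarrow> 'a) set \<Rightarrow> bool" where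
  "frobenius_group X G \<longleftrightarrow>
     (\<forall>g\<in>G. bij_betw g X X) \<and>
     (\<forall>x\<in>X. \<forall>y\<in>X. \<exists>g\<in>G. g x = y) \<and>
     (\<exists>g\<in>G. \<exists>x\<in>X. g x = x \<and> (\<exists>z\<in>X. g z \<noteq> z)) \<and>
     (\<forall>g\<in>G. (\<exists>x\<in>X. \<exists>y\<in>X. x \<noteq> y \<and> g x = x \<and> g y = y) \<longrightarrow> (\<forall>z\<in>X. g z = z))"

definition frobenius_kernel :: "'a set \<Rightarrow> ('a \<Rightarrow> 'a) set \<Rightarrow> ('a \<Rightarrow> 'a) set" where
  "frobenius_kernel X G = {g\<in>G. (\<forall>x\<in>X. g x = x) \<or> (\<forall>x\<in>X. g x \<noteq> x)}"

definition units_subgroup :: "int \<Rightarrow> int set \<Rightarrow> bool" where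
  "units_subgroup n H \<longleftrightarrow> H \<subseteq> {0..<n} \<and> (\<forall>h\<in>H. coprime h n) \<and> 1 \<in> H \<and>
     (\<forall>h\<in>H. \<forall>h'\<in>H. (h * h') mod n \<in> H) \<and> (\<forall>h\<in>H. \<exists>h'\<in>H. (h * h') mod n = 1)"

text \<open>Z_n semidirect H acting by [x]^([y],[m]) = [(x+y)m]\<close>
definition sdp_act :: "int \<Rightarrow> int \<Rightarrow> int \<Rightarrow> int \<Rightarrow> int" where
  "sdp_act n y m = (\<lambda>x. ((x + y) * m) mod n)"

definition sdp_group :: "int \<Rightarrow> int set \<Rightarrow> (int \<Rightarrow> int) set" where
  "sdp_group n H = {sdp_act n y m | y m. y \<in> {0..<n} \<and> m \<in> H}"

definition zn_translations :: "int \<Rightarrow> (int \<Rightarrow> int) set" where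
  "zn_translations n = {sdp_act n y 1 | y. y \<in> {0..<n}}"

inductive_set Zn_gen :: "int \<Rightarrow> int set \<Rightarrow> int set" for n T where
  zero: "0 \<in> Zn_gen n T"
| gen: "t \<in> T \<Longrightarrow> t mod n \<in> Zn_gen n T"
| add: "x \<in> Zn_gen n T \<Longrightarrow> y \<in> Zn_gen n T \<Longrightarrow> (x + y) mod n \<in> Zn_gen n T"
| neg: "x \<in> Zn_gen n T \<Longrightarrow> (- x) mod n \<in> Zn_gen n T"

definition first_kind_frobenius_conn :: "int \<Rightarrow> int set \<Rightarrow> int set \<Rightarrow> bool" where
  "first_kind_frobenius_conn n H S \<longleftrightarrow>
     (\<exists>s\<in>{0..<n}. S = {(s * h) mod n | h. h \<in> H} \<and>
        Zn_gen n {(s * h) mod n | h. h \<in> H} = {0..<n} \<and>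
        (even (card H) \<or> (s \<noteq> 0 \<and> (2 * s) mod n = 0)))"

definition frobenius_circulant :: "int \<Rightarrow> int \<Rightarrow> int \<Rightarrow> int \<Rightarrow> bool" where
  "frobenius_circulant n a b c \<longleftrightarrow> n \<ge> 7 \<and> tl_6valent n a b c \<and>
     (\<exists>H. units_subgroup n H \<and>
          frobenius_group {0..<n} (sdp_group n H) \<and>
          frobenius_kernel {0..<n} (sdp_group n H) = zn_translations n \<and>
          first_kind_frobenius_conn n H (tl_conn n a b c))"

end

(*
  If N divides a^2 - a + 1, then x + y\<rho> \<mapsto> x + ya is a ring map Z[\<rho>] \<rightarrow> Z_N.  When moreover
  N = N(\<alpha>) divides c + da for \<alpha> = c + d\<rho>, its kernel is exactly (\<alpha>), and it sends
  \<plusminus>1, \<plusminus>\<rho>, \<plusminus>\<rho>^2 to \<plusminus>1, \<plusminus>a, \<plusminus>(a - 1); hence EJ_\<alpha> \<cong> TL_N(a, a - 1, 1).  For gcd(c, d) = 1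
  such an a exists, and conversely, if 3 does not divide N, such an \<alpha> exists: by Thue's
  pigeonhole argument the lattice {(u, w). N | u + wa} contains a nonzero vector of norm N, 2N
  or 3N, and the last two cases reduce to norm N.

  Modulo N, a is a root of unity of order exactly 6, and the maps x \<mapsto> (x + y) a^i form a
  Frobenius group with kernel Z_N.  Conversely, in a Frobenius group Z_n x| H the complement H
  acts semiregularly on the nonzero residues, so |H| = 6 divides n - 1.
*)
theory Submission
  imports Defs "HOL-Library.Discrete_Functions"
begin

section \<open>Evaluation at a root of \<open>x\<^sup>2 - x + 1\<close>\<close>

definition ej_eval :: "int \<Rightarrow> int \<times> int \<Rightarrow> int" where
  "ej_eval a p = fst p + snd p * a"

lemma ej_eval_sub: "ej_eval a (ej_sub p q) = ej_eval a p - ej_eval a q"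
  by (simp add: ej_eval_def ej_sub_def algebra_simps)

lemma ej_eval_mult:
  "ej_eval a (ej_mult p q) = ej_eval a p * ej_eval a q - snd p * snd q * (a^2 - a + 1)"
  by (simp add: ej_eval_def ej_mult_def algebra_simps power2_eq_square)

lemma ej_norm_via_eval: "ej_norm (c, d) = (c + d*a) * (c + d - d*a) + d^2 * (a^2 - a + 1)"
  by (simp add: ej_norm_def algebra_simps power2_eq_square)

lemma dvd_ej_norm:
  assumes "n dvd c + d*a" "n dvd a^2 - a + 1"
  shows "n dvd ej_norm (c, d)"
  unfolding ej_norm_via_eval[of c d a] using assms by simp

lemma ej_norm_pos: "(c, d) \<noteq> (0, 0) \<Longrightarrow> ej_norm (c, d) > 0"
proof -
  assume "(c, d) \<noteq> (0, 0)"
  then have "(2*c + d)^2 + 3*d^2 > 0"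
    by (cases "d = 0") (simp_all add: add_nonneg_pos)
  moreover have "4 * ej_norm (c, d) = (2*c + d)^2 + 3*d^2"
    by (simp add: ej_norm_def algebra_simps power2_eq_square)
  ultimately show ?thesis by simp
qed

lemma ej_norm_mult: "ej_norm (ej_mult p q) = ej_norm p * ej_norm q"
  by (simp add: ej_norm_def ej_mult_def algebra_simps power2_eq_square)

text \<open>Multiplying by the conjugate \<open>(c + d) - d\<rho>\<close> of \<open>\<alpha> = c + d\<rho>\<close> turns divisibility by \<open>\<alpha>\<close>
  into divisibility of both coordinates by \<open>N(\<alpha>)\<close>.\<close>
lemma dvd_eval_imp_ej_cong:
  assumes N: "ej_norm (c, d) = N" "N > 0"
    and dvd: "N dvd c + d*a" "N dvd a^2 - a + 1" "N dvd ej_eval a \<xi> - ej_eval a \<eta>"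
  shows "ej_cong (c, d) \<xi> \<eta>"
proof -
  obtain x y where xy: "ej_sub \<xi> \<eta> = (x, y)" by fastforce
  have dx: "N dvd x + y*a" using dvd(3) ej_eval_sub[of a \<xi> \<eta>] by (simp add: xy ej_eval_def)
  define P where "P = x*(c + d) + y*d"
  define Q where "Q = y*c - x*d"
  have "Q = y * (c + d*a) - d * (x + y*a)"
    by (simp add: Q_def algebra_simps)
  then have "N dvd Q" using dx dvd(1) by simp
  have "P = (x + y*a) * (c + d - d*a) + y*d * (a^2 - a + 1) - Q * a"
    by (simp add: P_def Q_def algebra_simps power2_eq_square)
  then have "N dvd P" using \<open>N dvd Q\<close> dx dvd(2) by simp
  then obtain g1 g2 where g: "P = N * g1" "Q = N * g2"
    using \<open>N dvd Q\<close> by blast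
  have "ej_mult (c, d) (P, Q) = (N * x, N * y)"
    by (simp flip: N(1) add: P_def Q_def ej_mult_def ej_norm_def algebra_simps power2_eq_square)
  then have "N * fst (ej_mult (c, d) (g1, g2)) = N * x" "N * snd (ej_mult (c, d) (g1, g2)) = N * y"
    unfolding g by (simp_all add: ej_mult_def algebra_simps)
  then have "ej_sub \<xi> \<eta> = ej_mult (c, d) (g1, g2)"
    using N(2) xy by (simp add: prod_eq_iff)
  then show ?thesis by (auto simp: ej_cong_def)
qed

lemma ej_cong_iff_dvd_eval:
  assumes "ej_norm (c, d) = N" "N > 0" and dvd: "N dvd c + d*a" "N dvd a^2 - a + 1"
  shows "ej_cong (c, d) \<xi> \<eta> \<longleftrightarrow> [ej_eval a \<xi> = ej_eval a \<eta>] (mod N)"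
proof
  assume "ej_cong (c, d) \<xi> \<eta>"
  then obtain \<gamma> where "ej_sub \<xi> \<eta> = ej_mult (c, d) \<gamma>"
    by (auto simp: ej_cong_def)
  then have "ej_eval a \<xi> - ej_eval a \<eta> = (c + d*a) * ej_eval a \<gamma> - d * snd \<gamma> * (a^2 - a + 1)"
    by (metis ej_eval_sub ej_eval_mult ej_eval_def fst_conv snd_conv)
  then show "[ej_eval a \<xi> = ej_eval a \<eta>] (mod N)"
    using dvd by (simp add: cong_iff_dvd_diff)
qed (use assms dvd_eval_imp_ej_cong in \<open>auto simp: cong_iff_dvd_diff\<close>)

lemma graph_iso_TL_EJ:
  assumes N: "ej_norm (c, d) = N" "N > 0" and "N dvd c + d*a" "N dvd a^2 - a + 1"
  shows "graph_iso (TL N a (a - 1) 1) (EJ (c, d))"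
proof -
  define R where "R = {(\<xi>, \<eta>). ej_cong (c, d) \<xi> \<eta>}"
  define f where "f x = {q. ej_eval a q mod N = x}" for x
  have class_eq: "R `` {p} = f (ej_eval a p mod N)" for p
    using ej_cong_iff_dvd_eval[OF assms] by (auto simp: R_def f_def cong_def)
  have f_eq_class: "f x = R `` {(x, 0)}" if "x \<in> {0..<N}" for x
    using that by (simp add: class_eq ej_eval_def)
  have in_f: "(x, 0) \<in> f x" if "x \<in> {0..<N}" for x
    using that by (simp add: f_def ej_eval_def)
  have "inj_on f {0..<N}"
    by (rule inj_onI) (use in_f in \<open>fastforce simp: f_def ej_eval_def\<close>)
  moreover have "f ` {0..<N} = UNIV // R"
  proof
    show "f ` {0..<N} \<subseteq> UNIV // R" by (auto simp: f_eq_class intro: quotientI)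
    show "UNIV // R \<subseteq> f ` {0..<N}" using N(2) by (auto simp: class_eq elim!: quotientE)
  qed
  ultimately have bij: "bij_betw f (fst (TL N a (a - 1) 1)) (fst (EJ (c, d)))"
    by (simp add: bij_betw_def TL_def cay_Zn_def EJ_def R_def)
  have conn: "tl_conn N a (a - 1) 1 = (\<lambda>u. ej_eval a u mod N) ` ej_conn"
    by (auto simp: tl_conn_def ej_conn_def ej_eval_def)
  have adj: "(x - y) mod N \<in> tl_conn N a (a - 1) 1 \<longleftrightarrow>
        (\<exists>\<xi>\<in>f x. \<exists>\<eta>\<in>f y. \<exists>u\<in>ej_conn. ej_cong (c, d) (ej_sub \<xi> \<eta>) u)"
    if "x \<in> {0..<N}" "y \<in> {0..<N}" for x y
  proof -
    have "ej_cong (c, d) (ej_sub \<xi> \<eta>) u \<longleftrightarrow> (x - y) mod N = ej_eval a u mod N"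
      if "\<xi> \<in> f x" "\<eta> \<in> f y" for \<xi> \<eta> u
      using that by (simp add: ej_cong_iff_dvd_eval[OF assms] ej_eval_sub f_def cong_def) (metis mod_diff_eq)
    then show ?thesis
      unfolding conn using in_f that by blast
  qed
  show ?thesis
    unfolding graph_iso_def
    by (rule exI[of _ f]) (use bij adj in \<open>simp add: TL_def cay_Zn_def EJ_def\<close>)
qed

lemma graph_iso_sym: "graph_iso G1 G2 \<Longrightarrow> graph_iso G2 G1"
proof -
  assume "graph_iso G1 G2"
  then obtain f where f: "bij_betw f (fst G1) (fst G2)"
    and adj: "\<forall>x\<in>fst G1. \<forall>y\<in>fst G1. snd G1 x y \<longleftrightarrow> snd G2 (f x) (f y)"
    unfolding graph_iso_def by blast
  have "\<forall>x\<in>fst G2. \<forall>y\<in>fst G2. snd G2 x y \<longleftrightarrow> snd G1 (inv_into (fst G1) f x) (inv_into (fst G1) f y)"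
    using adj f by (auto simp: bij_betw_def f_inv_into_f inv_into_into)
  then show ?thesis using bij_betw_inv_into[OF f] unfolding graph_iso_def by blast
qed

lemma graph_iso_card_eq: "graph_iso G1 G2 \<Longrightarrow> card (fst G1) = card (fst G2)"
  unfolding graph_iso_def by (metis bij_betw_same_card)

section \<open>Representing \<open>N\<close> as a norm\<close>

lemma coprime_root_shift:
  fixes a n t :: int
  assumes "n dvd a^2 - a + 1" "coprime (t^2 + t + 1) n"
  shows "coprime (a + t) n"
proof -
  have "[t^2 + t + 1 = (a + t) * (1 + t - a)] (mod n)"
    using assms(1) by (simp add: cong_iff_dvd_diff algebra_simps power2_eq_square)
  then show ?thesis using assms(2) cong_imp_coprime by fastforce
qed

lemma odd_of_dvd_root:
  fixes n a :: int
  assumes "n dvd a^2 - a + 1"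
  shows "odd n"
proof -
  have "odd (a^2 - a + 1)" by (simp add: power2_eq_square)
  then show ?thesis using assms by (meson dvd_trans)
qed

lemma coprime_3_of_mod_6:
  fixes n :: int
  assumes "n mod 6 = 1"
  shows "coprime 3 n"
proof -
  have "[1 = n] (mod 3)" using assms by (simp add: cong_def) presburger
  then show ?thesis using cong_imp_coprime[of 1 n 3] by (simp add: coprime_commute)
qed

lemma even_ej_norm_imp_4_dvd: "even (ej_norm (u, w)) \<Longrightarrow> 4 dvd ej_norm (u, w)"
  by (auto simp: ej_norm_def power2_eq_square elim!: evenE)

lemma three_dvd_ej_normE:
  assumes "3 dvd ej_norm (u, w)"
  obtains x y where "(u, w) = ej_mult (x, y) (1, 1)"
proof -
  have "ej_norm (u, w) = (u - w)^2 + 3 * (u*w)"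
    by (simp add: ej_norm_def algebra_simps power2_eq_square)
  then have "3 dvd (u - w)^2" using assms by (simp add: dvd_add_left_iff)
  then have "3 dvd w - u" using prime_dvd_power[of 3 "u - w" 2]
    by (auto simp: dvd_diff_commute)
  then obtain y where "w = u + 3*y" by (auto elim!: dvdE simp: algebra_simps)
  then have "(u, w) = ej_mult (u + y, y) (1, 1)" by (simp add: ej_mult_def)
  then show ?thesis by (rule that)
qed

text \<open>Thue's lemma: pigeonhole on the \<open>(\<lfloor>\<surd>n\<rfloor> + 1)\<^sup>2 > n\<close> points of a square.\<close>
lemma lattice_vector_norm_le:
  fixes n a :: int
  assumes "n > 0"
  obtains u w where "(u, w) \<noteq> (0, 0)" "n dvd u + w*a" "ej_norm (u, w) \<le> 3*n"
proof -
  define B where "B = int (floor_sqrt (nat n))"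
  have B0: "B \<ge> 0" by (simp add: B_def)
  have "int ((floor_sqrt (nat n))^2) \<le> int (nat n)"
    by (simp only: of_nat_le_iff) simp
  then have "B^2 \<le> n" using assms by (simp add: B_def)
  have "int (nat n) < int ((Suc (floor_sqrt (nat n)))^2)"
    by (simp only: of_nat_less_iff) (rule Suc_floor_sqrt_power2_gt)
  then have "n < (B + 1)^2" using assms by (simp add: B_def add.commute)
  define box where "box = {0..B} \<times> {0..B}"
  define g where "g p = (fst p + snd p * a) mod n" for p
  have "card (g ` box) \<le> card {0..<n}"
    by (rule card_mono) (use assms in \<open>auto simp: g_def\<close>)
  also have "\<dots> < card box"
    using B0 \<open>n < (B + 1)^2\<close> by (simp add: box_def nat_mult_distrib power2_eq_square flip: nat_mult_distrib)
  finally obtain p q where pq: "p \<in> box" "q \<in> box" "p \<noteq> q" "g p = g q"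
    by (metis inj_on_def card_image less_irrefl)
  define u where "u = fst p - fst q"
  define w where "w = snd p - snd q"
  have uB: "\<bar>u\<bar> \<le> B" and wB: "\<bar>w\<bar> \<le> B" using pq(1,2) by (auto simp: box_def u_def w_def)
  have "u*w \<le> \<bar>u\<bar> * \<bar>w\<bar>" by (simp flip: abs_mult)
  also have "\<dots> \<le> B^2" using uB wB by (simp add: power2_eq_square mult_mono)
  finally have "u*w \<le> B^2" .
  moreover have "u^2 \<le> B^2" "w^2 \<le> B^2"
    using uB wB B0 by (metis abs_le_square_iff abs_of_nonneg)+
  ultimately have "ej_norm (u, w) \<le> 3*n" using \<open>B^2 \<le> n\<close> by (simp add: ej_norm_def)
  moreover have "(u, w) \<noteq> (0, 0)" using pq(3) by (auto simp: u_def w_def prod_eq_iff)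
  moreover have "n dvd u + w*a"
    using pq(4) by (simp add: g_def u_def w_def mod_eq_dvd_iff algebra_simps)
  ultimately show ?thesis using that by blast
qed

text \<open>Of the three possible values \<open>N(u + w\<rho>) \<in> {n, 2n, 3n}\<close> of a short lattice vector,
  \<open>2n\<close> is excluded by parity and \<open>3n\<close> is reduced to \<open>n\<close> by dividing out \<open>1 + \<rho>\<close>, of norm 3.\<close>
lemma ej_norm_representation:
  fixes n a :: int
  assumes n: "n > 0" "coprime 3 n" and root: "n dvd a^2 - a + 1"
  obtains c d where "ej_norm (c, d) = n" "n dvd c + d*a"
proof -
  obtain u w where uw: "(u, w) \<noteq> (0, 0)" "n dvd u + w*a" "ej_norm (u, w) \<le> 3*n"
    using lattice_vector_norm_le[OF n(1)] by blast
  obtain j where j: "ej_norm (u, w) = n * j"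
    using dvd_ej_norm[OF uw(2) root] by blast
  have "0 < n * j" using ej_norm_pos[OF uw(1)] j by simp
  then have "1 \<le> j" "j \<le> 3" using n(1) uw(3) j by (simp_all add: zero_less_mult_iff)
  then consider "j = 1" | "j = 2" | "j = 3" by linarith
  then show ?thesis
  proof cases
    case 1
    then show ?thesis using that j uw(2) by simp
  next
    case 2
    then have "4 dvd 2 * n" using even_ej_norm_imp_4_dvd[of u w] j by (simp add: mult.commute)
    then show ?thesis using odd_of_dvd_root[OF root] by presburger
  next
    case 3
    then have "3 dvd ej_norm (u, w)" using j by simp
    then obtain x y where xy: "(u, w) = ej_mult (x, y) (1, 1)"
      by (rule three_dvd_ej_normE)
    have "3 * ej_norm (x, y) = 3 * n"
      using j 3 ej_norm_mult[of "(x, y)" "(1, 1)"] by (simp add: xy ej_norm_def mult.commute)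
    moreover have "ej_eval a (x, y) * (a + 1) = (u + w*a) + y * (a^2 - a + 1)"
      using ej_eval_mult[of a "(x, y)" "(1, 1)"] by (simp flip: xy add: ej_eval_def algebra_simps)
    then have "n dvd ej_eval a (x, y) * (a + 1)"
      using uw(2) root by simp
    moreover have "coprime (a + 1) n"
      using coprime_root_shift[OF root, of 1] n(2) by simp
    ultimately show ?thesis
      using that by (simp add: coprime_commute coprime_dvd_mult_left_iff ej_eval_def)
  qed
qed

lemma gcd_eq_1_of_ej_norm:
  fixes c d a n :: int
  assumes "ej_norm (c, d) = n" "n > 0" "n dvd c + d*a" "n dvd a^2 - a + 1"
  shows "gcd c d = 1"
proof -
  define g where "g = gcd c d"
  obtain c' d' where cd: "c = g * c'" "d = g * d'"
    unfolding g_def by (meson gcd_dvd1 gcd_dvd2 dvdE)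
  define m where "m = ej_norm (c', d')"
  have n: "n = g * (g * m)"
    using assms(1) by (simp add: m_def cd ej_norm_def algebra_simps power2_eq_square)
  then have "g > 0" "m \<noteq> 0" using assms(2) g_def by (auto simp: zero_less_mult_iff)
  have "g * (g * m) dvd g * (c' + d'*a)"
    using assms(3) by (simp add: n cd algebra_simps)
  then have "g * m dvd c' + d'*a" using \<open>g > 0\<close> by simp
  moreover have "g * m dvd a^2 - a + 1" using assms(4) n by (metis dvd_mult_right)
  ultimately have "g * m dvd m" unfolding m_def by (rule dvd_ej_norm)
  then have "g dvd 1" using \<open>m \<noteq> 0\<close> by (metis dvd_mult_cancel_right mult_1)
  then show ?thesis using \<open>g > 0\<close> g_def by simp
qed

text \<open>The root is \<open>a \<equiv> -c/d\<close>, the image of \<open>\<rho>\<close> under \<open>\<int>[\<rho>]/(c + d\<rho>) \<cong> \<int>\<^sub>N\<close>.\<close>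
lemma exists_root_of_coprime:
  fixes c d :: int
  assumes "coprime c d" "ej_norm (c, d) = N"
  obtains a where "N dvd c + d*a" "N dvd a^2 - a + 1"
proof -
  have "coprime d N"
  proof (rule coprimeI)
    fix q assume q: "q dvd d" "q dvd N"
    have "c^2 = N - d * (c + d)" using assms(2) by (simp add: ej_norm_def algebra_simps power2_eq_square)
    then have "q dvd c^2" using q by simp
    with q(1) show "is_unit q"
      using assms(1) by (metis coprime_common_divisor coprime_commute coprime_power_right_iff)
  qed
  then obtain w where "[d * w = 1] (mod N)" using cong_solve_coprime_int by blast
  then have dw: "N dvd d*w - 1" by (simp add: cong_iff_dvd_diff)
  define a where "a = - c * w"
  have "c + d*a = (-c) * (d*w - 1)" by (simp add: a_def algebra_simps)
  then have "N dvd c + d*a" using dw by simp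
  have "d^2 * (a^2 - a + 1) = ej_norm (c, d) + (d*w - 1) * (c^2 * (d*w + 1) + c*d)"
    by (simp add: a_def ej_norm_def algebra_simps power2_eq_square)
  then have "N dvd d^2 * (a^2 - a + 1)" using dw assms(2) by simp
  then have "N dvd a^2 - a + 1"
    using \<open>coprime d N\<close> by (simp add: coprime_commute coprime_dvd_mult_right_iff)
  with \<open>N dvd c + d*a\<close> show ?thesis by (rule that)
qed

lemma ej_norm_parametrisation:
  fixes c d a n :: int
  assumes "ej_norm (c, d) = n" "n > 0" "n dvd c + d*a" "n dvd a^2 - a + 1"
  obtains s where "d = s*n + c*(a - 1)"
    "((a^2 - a + 1) div n) * c^2 + (2*a - 1)*s*c + s^2*n = 1"
proof -
  define k where "k = (a^2 - a + 1) div n"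
  have k: "a^2 - a + 1 = k*n" using assms(4) by (simp add: k_def)
  have "d - c*(a - 1) = d*(a^2 - a + 1) - (a - 1)*(c + d*a)"
    by (simp add: algebra_simps power2_eq_square)
  then have "n dvd d - c*(a - 1)" using assms(3,4) by simp
  then obtain s where s: "d = s*n + c*(a - 1)" by (metis dvdE add_diff_cancel_left' diff_add_cancel mult.commute)
  have "n * 1 = c^2 + c*d + d^2" using assms(1) by (simp add: ej_norm_def)
  also have "\<dots> = c^2 * (a^2 - a + 1) + (2*a - 1)*s*c*n + s^2*n^2"
    by (simp add: s algebra_simps power2_eq_square)
  also have "\<dots> = n * (k*c^2 + (2*a - 1)*s*c + s^2*n)"
    by (simp only: k) (simp add: algebra_simps power2_eq_square)
  finally have "k*c^2 + (2*a - 1)*s*c + s^2*n = 1" using assms(2) by (simp only: mult_left_cancel)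
  then show ?thesis using that s k_def by blast
qed

section \<open>Frobenius circulants\<close>

lemma sdp_act_mem_sdp_group: "y \<in> {0..<n} \<Longrightarrow> m \<in> H \<Longrightarrow> sdp_act n y m \<in> sdp_group n H"
  by (auto simp: sdp_group_def)

lemma bij_betw_sdp_act:
  assumes "coprime m n" "n > 0"
  shows "bij_betw (sdp_act n y m) {0..<n} {0..<n}"
proof -
  have "inj_on (sdp_act n y m) {0..<n}"
  proof (rule inj_onI)
    fix x x' assume "x \<in> {0..<n}" "x' \<in> {0..<n}" "sdp_act n y m x = sdp_act n y m x'"
    then have "[x + y = x' + y] (mod n)"
      using assms(1) by (simp add: sdp_act_def cong_mult_rcancel flip: cong_def)
    then show "x = x'" using \<open>x \<in> _\<close> \<open>x' \<in> _\<close> by (simp add: cong_add_rcancel) (simp add: cong_def)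
  qed
  moreover have "sdp_act n y m ` {0..<n} \<subseteq> {0..<n}" using assms(2) by (auto simp: sdp_act_def)
  ultimately show ?thesis by (simp add: bij_betw_def endo_inj_surj)
qed

lemma sdp_act_fixed_point_unique:
  fixes n :: int
  assumes "coprime (m - 1) n" "x \<in> {0..<n}" "x' \<in> {0..<n}"
    and "sdp_act n y m x = x" "sdp_act n y m x' = x'"
  shows "x = x'"
proof -
  have "n dvd (x + y) * m - x" "n dvd (x' + y) * m - x'"
    using assms(2-5) by (simp_all add: sdp_act_def flip: mod_eq_dvd_iff)
  moreover have "(x - x') * (m - 1) = ((x + y) * m - x) - ((x' + y) * m - x')"
    by (simp add: algebra_simps)
  ultimately have "n dvd (x - x') * (m - 1)" by (metis dvd_diff)
  then have "n dvd x - x'"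
    using assms(1) by (simp add: coprime_commute coprime_dvd_mult_left_iff)
  then show "x = x'" using assms(2,3) by (simp flip: mod_eq_dvd_iff)
qed

lemma sdp_act_fixed_point_exists:
  fixes n :: int
  assumes "coprime (m - 1) n" "n > 0"
  obtains x where "x \<in> {0..<n}" "sdp_act n y m x = x"
proof -
  obtain w where "[(m - 1) * w = 1] (mod n)" using cong_solve_coprime_int[OF assms(1)] by blast
  then have w: "n dvd (m - 1) * w - 1" by (simp add: cong_iff_dvd_diff)
  define x where "x = (- (y * m * w)) mod n"
  have "x mod n = (- (y * m * w)) mod n" by (simp add: x_def)
  then have "n dvd x + y * m * w" by (simp add: mod_eq_dvd_iff)
  moreover have "(x + y) * m - x = (x + y * m * w) * (m - 1) - y * m * ((m - 1) * w - 1)"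
    by (simp add: algebra_simps)
  ultimately have "n dvd (x + y) * m - x" using w by simp
  moreover have "x \<in> {0..<n}" using assms(2) by (simp add: x_def)
  ultimately have "sdp_act n y m x = x"
    by (simp add: sdp_act_def flip: mod_eq_dvd_iff)
  with \<open>x \<in> {0..<n}\<close> show ?thesis by (rule that)
qed

lemma sdp_act_1_fixed_point:
  fixes n :: int
  assumes "y \<in> {0..<n}" "x \<in> {0..<n}" "sdp_act n y 1 x = x"
  shows "y = 0"
proof -
  have "[x + y = x + 0] (mod n)" using assms(2,3) by (simp add: sdp_act_def cong_def)
  then show ?thesis using assms(1) by (simp only: cong_add_lcancel) (simp add: cong_def)
qed

lemma frobenius_group_sdp_group:
  fixes n :: int
  assumes n: "n > 1" and H: "units_subgroup n H"
    and fpf: "\<forall>h\<in>H. h \<noteq> 1 \<longrightarrow> coprime (h - 1) n" and nontriv: "H \<noteq> {1}"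
  shows "frobenius_group {0..<n} (sdp_group n H)"
  unfolding frobenius_group_def
proof (intro conjI ballI impI)
  fix g assume "g \<in> sdp_group n H"
  then obtain y m where g: "g = sdp_act n y m" "y \<in> {0..<n}" "m \<in> H"
    by (auto simp: sdp_group_def)
  then show "bij_betw g {0..<n} {0..<n}"
    using H n by (auto simp: units_subgroup_def intro: bij_betw_sdp_act)
  assume "\<exists>x\<in>{0..<n}. \<exists>x'\<in>{0..<n}. x \<noteq> x' \<and> g x = x \<and> g x' = x'"
  then obtain x x' where x: "x \<in> {0..<n}" "x' \<in> {0..<n}" "x \<noteq> x'" "g x = x" "g x' = x'"
    by blast
  then have "m = 1" using sdp_act_fixed_point_unique fpf g by metis
  then have "y = 0" using sdp_act_1_fixed_point g x by blast
  fix z assume "z \<in> {0..<n}"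
  then show "g z = z" using g \<open>m = 1\<close> \<open>y = 0\<close> by (simp add: sdp_act_def)
next
  fix x z :: int assume "x \<in> {0..<n}" "z \<in> {0..<n}"
  moreover have "sdp_act n ((z - x) mod n) 1 \<in> sdp_group n H"
    using n H by (intro sdp_act_mem_sdp_group) (auto simp: units_subgroup_def)
  ultimately show "\<exists>g\<in>sdp_group n H. g x = z"
    by (intro bexI[of _ "sdp_act n ((z - x) mod n) 1"]) (auto simp: sdp_act_def mod_add_right_eq)
next
  obtain h where h: "h \<in> H" "h \<noteq> 1" using nontriv H by (auto simp: units_subgroup_def)
  then have "h \<in> {0..<n}" using H by (auto simp: units_subgroup_def)
  moreover have "sdp_act n 0 h \<in> sdp_group n H" using n h by (intro sdp_act_mem_sdp_group) auto
  ultimately show "\<exists>g\<in>sdp_group n H. \<exists>x\<in>{0..<n}. g x = x \<and> (\<exists>z\<in>{0..<n}. g z \<noteq> z)"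
    using n h by (intro bexI[of _ "sdp_act n 0 h"] bexI[of _ 0] conjI bexI[of _ 1]) (auto simp: sdp_act_def)
qed

lemma frobenius_kernel_sdp_group:
  fixes n :: int
  assumes n: "n > 1" and H: "units_subgroup n H"
    and fpf: "\<forall>h\<in>H. h \<noteq> 1 \<longrightarrow> coprime (h - 1) n"
  shows "frobenius_kernel {0..<n} (sdp_group n H) = zn_translations n"
proof
  show "frobenius_kernel {0..<n} (sdp_group n H) \<subseteq> zn_translations n"
  proof
    fix g assume "g \<in> frobenius_kernel {0..<n} (sdp_group n H)"
    then obtain y m where g: "g = sdp_act n y m" "y \<in> {0..<n}" "m \<in> H"
      and kernel: "(\<forall>x\<in>{0..<n}. g x = x) \<or> (\<forall>x\<in>{0..<n}. g x \<noteq> x)"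
      by (auto simp: frobenius_kernel_def sdp_group_def)
    have "m = 1"
    proof (rule ccontr)
      \<comment> \<open>otherwise \<open>g\<close> has a fixed point, so it is the identity and fixes both \<open>0\<close> and \<open>1\<close>\<close>
      assume "m \<noteq> 1"
      then have "coprime (m - 1) n" using fpf g(3) by blast
      moreover obtain x where "x \<in> {0..<n}" "g x = x"
        using sdp_act_fixed_point_exists[OF \<open>coprime (m - 1) n\<close>] n g(1) by auto
      ultimately have "(0::int) = 1"
        using kernel n g(1) by (intro sdp_act_fixed_point_unique[of m n 0 1 y]) auto
      then show False by simp
    qed
    then show "g \<in> zn_translations n" using g by (auto simp: zn_translations_def)
  qed
  show "zn_translations n \<subseteq> frobenius_kernel {0..<n} (sdp_group n H)"
  proof
    fix g assume "g \<in> zn_translations n"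
    then obtain y where g: "g = sdp_act n y 1" "y \<in> {0..<n}" by (auto simp: zn_translations_def)
    have "g \<in> sdp_group n H" using g H by (auto simp: units_subgroup_def intro: sdp_act_mem_sdp_group)
    moreover have "(\<forall>x\<in>{0..<n}. g x = x) \<or> (\<forall>x\<in>{0..<n}. g x \<noteq> x)"
      using g sdp_act_1_fixed_point by (cases "y = 0") (auto simp: sdp_act_def)
    ultimately show "g \<in> frobenius_kernel {0..<n} (sdp_group n H)"
      by (simp add: frobenius_kernel_def)
  qed
qed

lemma coprime_minus_one_of_frobenius:
  fixes n :: int
  assumes n: "n > 1" and frob: "frobenius_group {0..<n} (sdp_group n H)"
    and H: "units_subgroup n H" and h: "h \<in> H" "h \<noteq> 1"
  shows "coprime (h - 1) n"
proof (rule ccontr)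
  assume "\<not> coprime (h - 1) n"
  define g where "g = gcd (h - 1) n"
  have "g \<noteq> 1" "g \<noteq> 0" "g \<ge> 0" using \<open>\<not> coprime (h - 1) n\<close> n
    by (simp_all add: g_def coprime_iff_gcd_eq_1)
  then have "g \<ge> 2" by linarith
  obtain z where z: "n = g * z" unfolding g_def by (meson gcd_dvd2 dvdE)
  then have "z > 0" using n \<open>g \<ge> 2\<close> zero_less_mult_pos[of g z] by simp
  then have "z \<in> {0..<n}" using z \<open>g \<ge> 2\<close> by (simp add: mult_less_cancel_right1)
  obtain t where "h - 1 = g * t" unfolding g_def by (meson gcd_dvd1 dvdE)
  then have "z * h = z + n * t" using z by (simp add: algebra_simps)
  then have "sdp_act n 0 h z = z" using \<open>z \<in> {0..<n}\<close> by (simp add: sdp_act_def)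
  then have "\<exists>x\<in>{0..<n}. \<exists>x'\<in>{0..<n}. x \<noteq> x' \<and> sdp_act n 0 h x = x \<and> sdp_act n 0 h x' = x'"
    using n \<open>z \<in> {0..<n}\<close> \<open>z > 0\<close> by (intro bexI[of _ 0] bexI[of _ z]) (auto simp: sdp_act_def)
  moreover have "sdp_act n 0 h \<in> sdp_group n H" using h n by (intro sdp_act_mem_sdp_group) auto
  ultimately have "\<forall>w\<in>{0..<n}. sdp_act n 0 h w = w"
    using frob unfolding frobenius_group_def by blast
  then have "sdp_act n 0 h 1 = 1" using n by simp
  moreover have "h \<in> {0..<n}" using h H by (auto simp: units_subgroup_def)
  ultimately show False using h(2) by (simp add: sdp_act_def)
qed

lemma coprime_diff_units_subgroup:
  fixes n :: int
  assumes H: "units_subgroup n H" and fpf: "\<forall>h\<in>H. h \<noteq> 1 \<longrightarrow> coprime (h - 1) n"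
    and h: "h \<in> H" "h' \<in> H" "h \<noteq> h'"
  shows "coprime (h - h') n"
proof -
  obtain k where k: "k \<in> H" "(h' * k) mod n = 1" using H h(2) by (auto simp: units_subgroup_def)
  define m where "m = (h * k) mod n"
  have "m \<in> H" using H h(1) k(1) by (simp add: m_def units_subgroup_def)
  have "n > 1" using H by (auto simp: units_subgroup_def)
  have "[h * k - h' * k = m - 1] (mod n)"
    using k(2) \<open>n > 1\<close> by (intro cong_diff) (simp_all add: m_def cong_def)
  then have cong: "[(h - h') * k = m - 1] (mod n)" by (simp add: algebra_simps)
  have "m \<noteq> 1"
  proof
    assume "m = 1"
    then have "[h * k = h' * k] (mod n)" using k(2) by (simp add: m_def cong_def)
    then have "[h = h'] (mod n)" using H k(1) by (simp add: units_subgroup_def cong_mult_rcancel)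
    moreover have "h \<in> {0..<n}" "h' \<in> {0..<n}" using H h by (auto simp: units_subgroup_def)
    ultimately show False using h(3) by (simp add: cong_def)
  qed
  then have "coprime (m - 1) n" using fpf \<open>m \<in> H\<close> by blast
  then have "coprime ((h - h') * k) n" using cong cong_imp_coprime cong_sym by blast
  then show ?thesis by simp
qed

definition mult_orbit_rel :: "int \<Rightarrow> int set \<Rightarrow> (int \<times> int) set" where
  "mult_orbit_rel n H = {(x, y). x \<in> {1..<n} \<and> (\<exists>h\<in>H. y = (x * h) mod n)}"

lemma mult_mod_mem_nonzero:
  fixes n :: int
  assumes "coprime h n" "x \<in> {1..<n}"
  shows "(x * h) mod n \<in> {1..<n}"
proof -
  have "\<not> n dvd x" using assms(2) by (auto simp: zdvd_not_zless)
  then have "\<not> n dvd x * h" using assms(1) by (simp add: coprime_commute coprime_dvd_mult_left_iff)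
  then have "(x * h) mod n \<noteq> 0" by (simp add: dvd_eq_mod_eq_0)
  moreover have "0 \<le> (x * h) mod n" "(x * h) mod n < n" using assms(2) by simp_all
  ultimately show ?thesis by simp
qed

lemma equiv_mult_orbit_rel:
  fixes n :: int
  assumes H: "units_subgroup n H"
  shows "equiv {1..<n} (mult_orbit_rel n H)"
proof -
  have "1 \<in> H" and H_mult: "\<And>h h'. h \<in> H \<Longrightarrow> h' \<in> H \<Longrightarrow> (h * h') mod n \<in> H"
    and H_inv: "\<And>h. h \<in> H \<Longrightarrow> \<exists>h'\<in>H. (h * h') mod n = 1"
    using H by (auto simp: units_subgroup_def)
  have A_mult: "(x * h) mod n \<in> {1..<n}" if "x \<in> {1..<n}" "h \<in> H" for x h
    using H that by (intro mult_mod_mem_nonzero) (auto simp: units_subgroup_def)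
  have mod_mult_assoc: "((x * h) mod n * h') mod n = (x * ((h * h') mod n)) mod n" for x h h'
    by (simp add: mod_mult_left_eq mod_mult_right_eq mult.assoc)
  show ?thesis
  proof (rule equivI)
    show "mult_orbit_rel n H \<subseteq> {1..<n} \<times> {1..<n}" using A_mult by (auto simp: mult_orbit_rel_def)
    show "refl_on {1..<n} (mult_orbit_rel n H)"
    proof (rule refl_onI)
      fix x assume "x \<in> {1..<n}"
      then have "x = (x * 1) mod n" by simp
      then show "(x, x) \<in> mult_orbit_rel n H"
        using \<open>x \<in> {1..<n}\<close> \<open>1 \<in> H\<close> unfolding mult_orbit_rel_def by blast
    qed
    show "sym (mult_orbit_rel n H)"
    proof (rule symI)
      fix x y assume "(x, y) \<in> mult_orbit_rel n H"
      then obtain h where "x \<in> {1..<n}" "h \<in> H" "y = (x * h) mod n" by (auto simp: mult_orbit_rel_def)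
      moreover obtain h' where "h' \<in> H" "(h * h') mod n = 1" using H_inv \<open>h \<in> H\<close> by blast
      ultimately have "x = (y * h') mod n" "y \<in> {1..<n}"
        using mod_mult_assoc[of x h h'] A_mult by simp_all
      then show "(y, x) \<in> mult_orbit_rel n H" using \<open>h' \<in> H\<close> unfolding mult_orbit_rel_def by blast
    qed
    show "trans (mult_orbit_rel n H)"
    proof (rule transI)
      fix x y z assume "(x, y) \<in> mult_orbit_rel n H" "(y, z) \<in> mult_orbit_rel n H"
      then obtain h h' where "x \<in> {1..<n}" "h \<in> H" "h' \<in> H" "z = ((x * h) mod n * h') mod n"
        by (auto simp: mult_orbit_rel_def)
      then have "z = (x * ((h * h') mod n)) mod n" "(h * h') mod n \<in> H"
        using mod_mult_assoc H_mult by simp_all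
      then show "(x, z) \<in> mult_orbit_rel n H" using \<open>x \<in> {1..<n}\<close> unfolding mult_orbit_rel_def by blast
    qed
  qed
qed

lemma card_mult_orbit:
  fixes n :: int
  assumes H: "units_subgroup n H" and fpf: "\<forall>h\<in>H. h \<noteq> 1 \<longrightarrow> coprime (h - 1) n"
    and X: "X \<in> {1..<n} // mult_orbit_rel n H"
  shows "card X = card H"
proof -
  obtain x where "x \<in> {1..<n}" "X = mult_orbit_rel n H `` {x}" using X by (auto elim: quotientE)
  then have x: "x \<in> {1..<n}" "X = (\<lambda>h. (x * h) mod n) ` H" by (auto simp: mult_orbit_rel_def)
  have "inj_on (\<lambda>h. (x * h) mod n) H"
  proof (rule inj_onI, rule ccontr)
    fix h h' assume "h \<in> H" "h' \<in> H" "(x * h) mod n = (x * h') mod n" "h \<noteq> h'"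
    then have "n dvd x * h - x * h'" by (simp only: mod_eq_dvd_iff)
    then have "n dvd x * (h - h')" by (simp only: right_diff_distrib)
    then have "n dvd x"
      using coprime_diff_units_subgroup[OF H fpf \<open>h \<in> H\<close> \<open>h' \<in> H\<close> \<open>h \<noteq> h'\<close>]
      by (simp add: coprime_commute coprime_dvd_mult_left_iff)
    then show False using x(1) by (auto simp: zdvd_not_zless)
  qed
  then show "card X = card H" unfolding x(2) by (rule card_image)
qed

lemma card_units_subgroup_dvd:
  fixes n :: int
  assumes H: "units_subgroup n H" and fpf: "\<forall>h\<in>H. h \<noteq> 1 \<longrightarrow> coprime (h - 1) n"
  shows "int (card H) dvd n - 1"
proof -
  have "card H dvd card {1..<n}"
    using equiv_imp_dvd_card[OF _ equiv_mult_orbit_rel[OF H]] card_mult_orbit[OF H fpf] by simp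
  then have "int (card H) dvd int (card {1..<n})" by (simp only: int_dvd_int_iff)
  moreover have "int (card {1..<n}) = n - 1" using H by (auto simp: units_subgroup_def)
  ultimately show ?thesis by simp
qed

lemma Zn_gen_dvd:
  assumes "x \<in> Zn_gen n T" "\<forall>t\<in>T. g dvd t" "g dvd n"
  shows "g dvd x"
  using assms by (induction rule: Zn_gen.induct) (auto intro: dvd_mod)

lemma Zn_gen_subset: "n > 0 \<Longrightarrow> Zn_gen n T \<subseteq> {0..<n}"
  by (auto elim: Zn_gen.induct)

lemma Zn_gen_eq_if_one_mem:
  assumes "n > 1" "1 \<in> T"
  shows "Zn_gen n T = {0..<n}"
proof
  show "Zn_gen n T \<subseteq> {0..<n}" using assms(1) Zn_gen_subset by simp
  have one: "1 \<in> Zn_gen n T" using Zn_gen.gen[OF assms(2), of n] assms(1) by simp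
  have "int k \<in> Zn_gen n T" if "int k < n" for k
    using that
  proof (induction k)
    case (Suc k)
    then have "(int k + 1) mod n \<in> Zn_gen n T" by (intro Zn_gen.add one) simp
    then show ?case using Suc.prems by (simp add: add.commute)
  qed (simp add: Zn_gen.zero)
  then show "{0..<n} \<subseteq> Zn_gen n T"
    by (metis atLeastLessThan_iff nonneg_int_cases subsetI)
qed

lemma coprime_of_Zn_gen_eq:
  assumes "Zn_gen n {(s * h) mod n | h. h \<in> H} = {0..<n}" "n > 1"
  shows "coprime s n"
proof -
  have "1 \<in> Zn_gen n {(s * h) mod n | h. h \<in> H}" using assms by simp
  moreover have "\<forall>t\<in>{(s * h) mod n | h. h \<in> H}. gcd s n dvd t"
    by (auto intro!: dvd_mod)
  ultimately have "gcd s n dvd 1" by (rule Zn_gen_dvd) simp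
  then show ?thesis by (simp add: coprime_iff_gcd_eq_1)
qed

lemma card_mult_image:
  fixes s n :: int
  assumes "coprime s n" "H \<subseteq> {0..<n}"
  shows "card {(s * h) mod n | h. h \<in> H} = card H"
proof -
  have "inj_on (\<lambda>h. (s * h) mod n) H"
  proof (rule inj_onI)
    fix h h' assume "h \<in> H" "h' \<in> H" "(s * h) mod n = (s * h') mod n"
    then have "[h = h'] (mod n)" using assms(1) by (simp flip: cong_def add: cong_mult_lcancel)
    moreover have "h \<in> {0..<n}" "h' \<in> {0..<n}" using \<open>h \<in> H\<close> \<open>h' \<in> H\<close> assms(2) by auto
    ultimately show "h = h'" by (simp add: cong_def)
  qed
  then show ?thesis by (simp add: card_image setcompr_eq_image)
qed

lemma card_tl_conn: "tl_6valent n a b e \<Longrightarrow> card (tl_conn n a b e) = 6"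
proof -
  assume "tl_6valent n a b e"
  moreover have "tl_conn n a b e = set [a mod n, b mod n, e mod n, (n - a) mod n, (n - b) mod n, (n - e) mod n]"
    by (simp add: tl_conn_def insert_commute)
  ultimately show ?thesis by (simp add: tl_6valent_def distinct_card)
qed

lemma frobenius_circulant_mod_6:
  assumes "frobenius_circulant n a b e"
  shows "n mod 6 = 1"
proof -
  obtain H s where n: "n \<ge> 7" and six: "tl_6valent n a b e" and H: "units_subgroup n H"
    and frob: "frobenius_group {0..<n} (sdp_group n H)"
    and S: "tl_conn n a b e = {(s * h) mod n | h. h \<in> H}"
    and gen: "Zn_gen n {(s * h) mod n | h. h \<in> H} = {0..<n}"
    using assms by (auto simp: frobenius_circulant_def first_kind_frobenius_conn_def)
  have "coprime s n" using coprime_of_Zn_gen_eq[OF gen] n by simp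
  moreover have "H \<subseteq> {0..<n}" using H by (simp add: units_subgroup_def)
  ultimately have "card {(s * h) mod n | h. h \<in> H} = card H" by (rule card_mult_image)
  then have "card H = 6" using card_tl_conn[OF six] S by simp
  have "\<forall>h\<in>H. h \<noteq> 1 \<longrightarrow> coprime (h - 1) n"
    using coprime_minus_one_of_frobenius[OF _ frob H] n by simp
  then have "int (card H) dvd n - 1" by (rule card_units_subgroup_dvd[OF H])
  then have "6 dvd n - 1" using \<open>card H = 6\<close> by simp
  then show ?thesis by presburger
qed

section \<open>The circulant \<open>TL\<^sub>N(a, a - 1, 1)\<close>\<close>

lemma power_mod_period:
  fixes x n :: int
  assumes "[x ^ k = 1] (mod n)"
  shows "x ^ i mod n = x ^ (i mod k) mod n"
proof -
  have "[x ^ (k * (i div k) + i mod k) = 1 ^ (i div k) * x ^ (i mod k)] (mod n)"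
    unfolding power_add power_mult using assms by (intro cong_mult cong_pow) simp_all
  then show ?thesis by (simp add: cong_def)
qed

lemma units_subgroup_powers:
  fixes x n :: int
  assumes "coprime x n" "n > 1" "[x ^ k = 1] (mod n)" "k > 0"
  shows "units_subgroup n ((\<lambda>i. x ^ i mod n) ` {..<k})"
proof -
  have range: "(\<lambda>i. x ^ i mod n) ` {..<k} = range (\<lambda>i. x ^ i mod n)"
  proof
    show "range (\<lambda>i. x ^ i mod n) \<subseteq> (\<lambda>i. x ^ i mod n) ` {..<k}"
      using power_mod_period[OF assms(3)] assms(4) by (auto intro!: image_eqI[of _ _ "_ mod k"])
  qed auto
  have "(x ^ i mod n) * (x ^ j mod n) mod n = x ^ (i + j) mod n" for i j
    by (simp add: power_add mod_mult_eq)
  moreover have "(x ^ i mod n) * (x ^ (i * (k - 1)) mod n) mod n = 1" for i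
  proof -
    have "i + i * (k - 1) = k * i" using assms(4) by (cases k) (simp_all add: algebra_simps)
    then have "(x ^ i mod n) * (x ^ (i * (k - 1)) mod n) mod n = (x ^ k) ^ i mod n"
      by (simp add: mod_mult_eq flip: power_add power_mult)
    also have "\<dots> = 1" using cong_pow[OF assms(3), of i] assms(2) by (simp add: cong_def)
    finally show ?thesis .
  qed
  ultimately show ?thesis
    unfolding units_subgroup_def range using assms(1,2)
    by (auto intro!: image_eqI[of _ _ 0])
qed

lemma inj_on_powers_mod:
  fixes x n :: int
  assumes "coprime x n" "n > 1" "\<And>j. 0 < j \<Longrightarrow> j < k \<Longrightarrow> coprime (x ^ j - 1) n"
  shows "inj_on (\<lambda>i. x ^ i mod n) {..<k}"
proof -
  have "x ^ i mod n \<noteq> x ^ j mod n" if "i < j" "j < k" for i j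
  proof
    assume "x ^ i mod n = x ^ j mod n"
    then have "[x ^ i * 1 = x ^ i * x ^ (j - i)] (mod n)"
      using that by (simp add: cong_def flip: power_add)
    then have "[1 = x ^ (j - i)] (mod n)"
      using assms(1) cong_mult_lcancel[of "x ^ i" n 1 "x ^ (j - i)"] by simp
    then have "n dvd x ^ (j - i) - 1" by (simp add: cong_iff_dvd_diff dvd_diff_commute)
    moreover have "coprime (x ^ (j - i) - 1) n" using assms(3) that by simp
    ultimately have "is_unit n" by (metis coprime_common_divisor dvd_refl)
    then show False using assms(2) by simp
  qed
  then show ?thesis
    by (intro inj_onI) (metis lessThan_iff linorder_neqE_nat)
qed

lemma powers_mod_minus_one_coprime:
  fixes x n :: int
  assumes "n > 1" "\<And>j. 0 < j \<Longrightarrow> j < k \<Longrightarrow> coprime (x ^ j - 1) n"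
    and "h \<in> (\<lambda>i. x ^ i mod n) ` {..<k}" "h \<noteq> 1"
  shows "coprime (h - 1) n"
proof -
  obtain j where j: "j < k" "h = x ^ j mod n" using assms(3) by blast
  have "j \<noteq> 0"
  proof
    assume "j = 0"
    then have "h = 1" using j(2) assms(1) by simp
    with assms(4) show False ..
  qed
  then have "coprime (x ^ j - 1) n" using assms(2) j(1) by simp
  moreover have "[x ^ j - 1 = h - 1] (mod n)" using j(2) by (simp add: cong_def mod_diff_left_eq)
  ultimately show ?thesis by (rule cong_imp_coprime[rotated])
qed

locale primitive_sixth_root =
  fixes N a :: int
  assumes N_gt_1: "N > 1" and coprime_3_N: "coprime 3 N" and root: "N dvd a^2 - a + 1"
begin

lemma power_cong:
  shows "[a^2 = a - 1] (mod N)" "[a^3 = -1] (mod N)" "[a^4 = -a] (mod N)"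
    "[a^5 = 1 - a] (mod N)" "[a^6 = 1] (mod N)"
proof -
  have "a^2 - (a - 1) = a^2 - a + 1" "a^3 - (-1) = (a + 1) * (a^2 - a + 1)"
    "a^4 - (-a) = (a^2 + a) * (a^2 - a + 1)" "a^5 - (1 - a) = (a^3 + a^2 - 1) * (a^2 - a + 1)"
    "a^6 - 1 = (a^4 + a^3 - a - 1) * (a^2 - a + 1)"
    by (simp_all add: algebra_simps eval_nat_numeral)
  then show "[a^2 = a - 1] (mod N)" "[a^3 = -1] (mod N)" "[a^4 = -a] (mod N)"
    "[a^5 = 1 - a] (mod N)" "[a^6 = 1] (mod N)"
    using root by (simp_all only: cong_iff_dvd_diff dvd_mult)
qed

lemma coprime_shifts:
  shows "coprime a N" "coprime (a - 1) N" "coprime (a + 1) N" "coprime (a - 2) N"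
  using coprime_root_shift[OF root, of 0] coprime_root_shift[OF root, of "-1"]
    coprime_root_shift[OF root, of 1] coprime_root_shift[OF root, of "-2"] coprime_3_N
  by simp_all

lemma coprime_power_minus_one:
  assumes "0 < k" "k < 6"
  shows "coprime (a ^ k - 1) N"
proof -
  have reduce: "[a ^ k = u] (mod N) \<Longrightarrow> coprime (u - 1) N \<Longrightarrow> coprime (a ^ k - 1) N" for u
    by (metis cong_diff cong_refl cong_imp_coprime cong_sym)
  have "coprime (-2) N" using odd_of_dvd_root[OF root] by (simp add: coprime_commute)
  have "- a - 1 = - (a + 1)" by simp
  then have "coprime (- a - 1) N" using coprime_shifts(3) by (simp only: coprime_minus_left_iff)
  have "k = 1 \<or> k = 2 \<or> k = 3 \<or> k = 4 \<or> k = 5" using assms by auto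
  then show ?thesis
    using reduce power_cong coprime_shifts \<open>coprime (-2) N\<close> \<open>coprime (- a - 1) N\<close>
    by (elim disjE) (simp_all add: algebra_simps)
qed

lemma power_mod_eq:
  shows "a ^ 0 mod N = 1 mod N" "a ^ 1 mod N = a mod N" "a ^ 2 mod N = (a - 1) mod N"
    "a ^ 3 mod N = (- 1) mod N" "a ^ 4 mod N = (- a) mod N" "a ^ 5 mod N = (1 - a) mod N"
  using power_cong by (simp_all add: cong_def)

lemma tl_conn_eq_powers: "tl_conn N a (a - 1) 1 = (\<lambda>i. a ^ i mod N) ` {..<6}"
proof -
  have "{..<6::nat} = {0, 1, 2, 3, 4, 5}" by auto
  then have "(\<lambda>i. a ^ i mod N) ` {..<6} =
      {1 mod N, a mod N, (a - 1) mod N, (- 1) mod N, (- a) mod N, (1 - a) mod N}"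
    by (simp only: image_insert image_empty power_mod_eq)
  then show ?thesis by (simp add: tl_conn_def insert_commute)
qed

lemma inj_on_powers: "inj_on (\<lambda>i. a ^ i mod N) {..<6}"
  using inj_on_powers_mod[OF coprime_shifts(1) N_gt_1 coprime_power_minus_one] by blast

lemma tl_6valent_powers: "tl_6valent N a (a - 1) 1"
proof -
  have "[a mod N, (a - 1) mod N, 1 mod N, (N - a) mod N, (N - (a - 1)) mod N, (N - 1) mod N]
        = map (\<lambda>i. a ^ i mod N) [1, 2, 0, 4, 5, 3]"
    by (simp only: list.map power_mod_eq minus_mod_self1 minus_diff_eq)
  moreover have "inj_on (\<lambda>i. a ^ i mod N) (set [1, 2, 0, 4, 5, 3])"
    by (rule inj_on_subset[OF inj_on_powers]) auto
  moreover have "distinct [1, 2, 0, 4, 5, 3 :: nat]" by simp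
  ultimately show ?thesis unfolding tl_6valent_def by (simp only: distinct_map simp_thms)
qed

lemma frobenius_circulant_TL:
  assumes "N \<ge> 7"
  shows "frobenius_circulant N a (a - 1) 1"
proof -
  define T where "T = tl_conn N a (a - 1) 1"
  have T_eq: "T = (\<lambda>i. a ^ i mod N) ` {..<6}" by (simp add: T_def tl_conn_eq_powers)
  have H: "units_subgroup N T"
    unfolding T_eq using units_subgroup_powers[OF coprime_shifts(1) N_gt_1 power_cong(5)] by simp
  have fpf: "\<forall>h\<in>T. h \<noteq> 1 \<longrightarrow> coprime (h - 1) N"
    unfolding T_eq using powers_mod_minus_one_coprime[OF N_gt_1 coprime_power_minus_one] by blast
  have "card T = 6" unfolding T_def by (rule card_tl_conn[OF tl_6valent_powers])
  then have "T \<noteq> {1}" by auto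
  have "T \<subseteq> {0..<N}" using H by (simp add: units_subgroup_def)
  then have "(\<lambda>h. (1 * h) mod N) ` T = T" by (auto simp: subset_iff intro: rev_image_eqI)
  then have "{(1 * h) mod N | h. h \<in> T} = T" by (simp only: setcompr_eq_image Collect_mem_eq)
  moreover have "1 \<in> T" using H by (simp add: units_subgroup_def)
  ultimately have "first_kind_frobenius_conn N T T"
    unfolding first_kind_frobenius_conn_def using N_gt_1 Zn_gen_eq_if_one_mem \<open>card T = 6\<close>
    by (intro bexI[of _ 1]) auto
  then show ?thesis
    unfolding frobenius_circulant_def T_def[symmetric]
    using assms tl_6valent_powers H frobenius_group_sdp_group[OF N_gt_1 H fpf \<open>T \<noteq> {1}\<close>]
      frobenius_kernel_sdp_group[OF N_gt_1 H fpf]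
    by blast
qed

end

lemma EJ_iso_frobenius_circulant_iff:
  fixes c d :: int
  assumes "ej_norm (c, d) \<ge> 7" "gcd c d = 1"
  shows "(\<exists>n a b e. frobenius_circulant n a b e \<and> graph_iso (EJ (c, d)) (TL n a b e)) \<longleftrightarrow>
         ej_norm (c, d) mod 6 = 1"
proof -
  define N where "N = ej_norm (c, d)"
  obtain a where a: "N dvd c + d*a" "N dvd a^2 - a + 1"
    using exists_root_of_coprime assms(2) N_def by (metis coprime_iff_gcd_eq_1)
  have iso: "graph_iso (TL N a (a - 1) 1) (EJ (c, d))"
    using graph_iso_TL_EJ[OF N_def[symmetric] _ a] assms(1) N_def by simp
  show ?thesis
  proof
    assume "\<exists>n a b e. frobenius_circulant n a b e \<and> graph_iso (EJ (c, d)) (TL n a b e)"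
    then obtain n a' b e where frob: "frobenius_circulant n a' b e"
      and iso': "graph_iso (EJ (c, d)) (TL n a' b e)" by blast
    have "card (fst (TL N a (a - 1) 1)) = card (fst (TL n a' b e))"
      using graph_iso_card_eq[OF iso] graph_iso_card_eq[OF iso'] by simp
    then have "N = n" using assms(1) frob by (simp add: N_def TL_def cay_Zn_def frobenius_circulant_def)
    then show "ej_norm (c, d) mod 6 = 1" using frobenius_circulant_mod_6[OF frob] N_def by simp
  next
    assume "ej_norm (c, d) mod 6 = 1"
    then interpret primitive_sixth_root N a
      using assms(1) a(2) coprime_3_of_mod_6 by unfold_locales (simp_all add: N_def)
    show "\<exists>n a b e. frobenius_circulant n a b e \<and> graph_iso (EJ (c, d)) (TL n a b e)"
      using frobenius_circulant_TL graph_iso_sym[OF iso] assms(1) N_def by blast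
  qed
qed

theorem theorem3p2:
  shows "(\<forall>(n::int) (a::int). n \<ge> 7 \<and> frobenius_circulant n a (a - 1) 1 \<and> n mod 6 = 1 \<and>
            [a^2 - a + 1 = 0] (mod n) \<longrightarrow>
          (\<exists>c d. gcd c d = 1 \<and> graph_iso (TL n a (a - 1) 1) (EJ (c, d)) \<and>
             (let k = (a^2 - a + 1) div n in
              \<exists>m r s.
                (c = r*n + m \<and> d = s*n - m*a \<and>
                   k*m^2 - ((a - 2)*r + (2*a - 1)*s)*m + (r^2 + r*s + s^2)*n = 1) \<or>
                (c = r*n + m \<and> d = s*n + m*(a - 1) \<and>
                   k*m^2 + ((a + 1)*r + (2*a - 1)*s)*m + (r^2 + r*s + s^2)*n = 1) \<or>
                (c = r*n + m*a \<and> d = s*n - m*(a - 1) \<and>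
                   k*m^2 + ((a + 1)*r - (a - 2)*s)*m + (r^2 + r*s + s^2)*n = 1))))
     \<and>
     (\<forall>c d::int. ej_norm (c, d) \<ge> 7 \<and> gcd c d = 1 \<longrightarrow>
        ((\<exists>n a b e. frobenius_circulant n a b e \<and> graph_iso (EJ (c, d)) (TL n a b e)) \<longleftrightarrow>
         ej_norm (c, d) mod 6 = 1))"
proof (intro conjI allI impI, goal_cases)
  case (1 n a)
  then have n: "n > 0" "coprime 3 n" and root: "n dvd a^2 - a + 1"
    using coprime_3_of_mod_6 by (auto simp: cong_0_iff)
  obtain c d where cd: "ej_norm (c, d) = n" "n dvd c + d*a"
    using ej_norm_representation[OF n root] by blast
  obtain s where "d = s*n + c*(a - 1)" "((a^2 - a + 1) div n) * c^2 + (2*a - 1)*s*c + s^2*n = 1"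
    by (rule ej_norm_parametrisation[OF cd(1) n(1) cd(2) root])
  then have "c = 0*n + c \<and> d = s*n + c*(a - 1) \<and>
      ((a^2 - a + 1) div n)*c^2 + ((a + 1)*0 + (2*a - 1)*s)*c + (0^2 + 0*s + s^2)*n = 1"
    by (simp add: algebra_simps power2_eq_square)
  moreover have "gcd c d = 1" by (rule gcd_eq_1_of_ej_norm[OF cd(1) n(1) cd(2) root])
  moreover have "graph_iso (TL n a (a - 1) 1) (EJ (c, d))" by (rule graph_iso_TL_EJ[OF cd(1) n(1) cd(2) root])
  ultimately show ?case unfolding Let_def by (intro exI[of _ c] exI[of _ d]) blast
next
  case (2 c d)
  then show ?case by (intro EJ_iso_frobenius_circulant_iff) simp_all
qed

end
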